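(* Let $d\ge2$, $s\in\{2,3,\dots\}$ and $n\in\mathbb N_0$. Let $\mathcal U_n^d(\mathsf w_{-1,-s})$ be the linear span of $$\mathcal H_n^{d,0}\ \cup\ \bigcup_{j=1}^{\min(s-1,n)}P_j^{(2n-2j+d-2,-s)}(1-2t)\,\mathcal H_{n-j}^{d,0}\ \cup\ (1-t)^s\,\mathcal V_{n-s}^d(\mathsf w_{-1,s})$$ (the last set being $\{0\}$ if $n<s$). Then every $Z\in\mathcal U_n^d(\mathsf w_{-1,-s})$ satisfies $\mathcal D_{-s}Z=\lambda_n^{(-s)}Z$ with $\lambda_n^{(-s)}=-n(n-s+d-1)$.
   Context: Cone points $(x,t)=(t\xi,t)$, $\xi\in\mathbb S^{d-1}$. $\mathcal D_\gamma=t(1-t)\frac{\partial^2}{\partial t^2}+\big(d-1-(d+\gamma)t\big)\frac{\partial}{\partial t}+t^{-1}\Delta_0^{(\xi)}$, acting on functions of $(t,\xi)$, $t$-derivatives at fixed $\xi$, $\Delta_0^{(\xi)}$ the Laplace–Beltrami operator on $\mathbb S^{d-1}$. $\mathcal H_m^{d,0}$: homogeneous harmonic polynomials of degree $m$ on $\mathbb R^d$ (so $Y(t\xi)=t^mY(\xi)$), with basis $\{Y_\ell^m\}$. Jacobi polynomials for arbitrary real parameters: $P_j^{(\alpha,\beta)}(u)=\sum_{k=0}^j\frac{(\alpha+k+1)_{j-k}(-j)_k(j+\alpha+\beta+1)_k}{j!\,k!}(\frac{1-u}{2})^k$, $(a)_k$ the Pochhammer symbol. $P_j^{(2n-2j+d-2,-s)}(1-2t)\mathcal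 H_{n-j}^{d,0}$ denotes $\{P_j^{(2n-2j+d-2,-s)}(1-2t)Y(x):Y\in\mathcal H_{n-j}^{d,0}\}$. $\mathcal V_k^d(\mathsf w_{-1,s})$ is the span of $\{P_{k-m}^{(2m+d-2,s)}(1-2t)Y_\ell^m(x):0\le m\le k,\ \ell\}$, the orthogonal polynomials of degree $k$ on the cone for the weight $t^{-1}(1-t)^s$; all spaces are regarded as spaces of functions on the cone. *)

theory Defs
  imports "HOL-Analysis.Analysis"
begin

definition jacobiP :: "nat \<Rightarrow> real \<Rightarrow> real \<Rightarrow> real \<Rightarrow> real" where
  "jacobiP j a b u = (\<Sum>k=0..j.
      pochhammer (a + real k + 1) (j - k) * pochhammer (- real j) k
      * pochhammer (real j + a + b + 1) k / (fact j * fact k) * ((1 - u) / 2) ^ k)"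

definition laplacian :: "(real^'n \<Rightarrow> real) \<Rightarrow> real^'n \<Rightarrow> real" where
  "laplacian h x = (\<Sum>i\<in>UNIV. deriv (deriv (\<lambda>r. h (x + r *\<^sub>R axis i 1))) 0)"

text \<open>Laplace--Beltrami operator on the unit sphere: Laplacian of the
  degree-0 homogeneous extension, evaluated on the sphere.\<close>
definition sphere_LB :: "(real^'n \<Rightarrow> real) \<Rightarrow> real^'n \<Rightarrow> real" where
  "sphere_LB g \<xi> = laplacian (\<lambda>x. g ((1 / norm x) *\<^sub>R x)) \<xi>"

definition hom_poly :: "nat \<Rightarrow> (real^'n \<Rightarrow> real) \<Rightarrow> bool" where
  "hom_poly m Y \<longleftrightarrow> (\<exists>A c. finite A \<and> (\<forall>\<alpha>\<in>A. (\<Sum>i\<in>UNIV. \<alpha> i) = m) \<and>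
      Y = (\<lambda>x. \<Sum>\<alpha>\<in>A. c \<alpha> * (\<Prod>i\<in>UNIV. (x $ i) ^ (\<alpha> i))))"

definition harm :: "nat \<Rightarrow> (real^'n \<Rightarrow> real) set" where
  "harm m = {Y. hom_poly m Y \<and> (\<forall>x. laplacian Y x = 0)}"

definition lin_span :: "(real^'n \<Rightarrow> real \<Rightarrow> real) set \<Rightarrow> (real^'n \<Rightarrow> real \<Rightarrow> real) set" where
  "lin_span S = {f. \<exists>A c. finite A \<and> A \<subseteq> S \<and> f = (\<lambda>x t. \<Sum>g\<in>A. c g * g x t)}"

definition Vspace :: "nat \<Rightarrow> real \<Rightarrow> (real^'n \<Rightarrow> real \<Rightarrow> real) set" where
  "Vspace k s = lin_span (\<Union>m\<in>{0..k}.
      {(\<lambda>x t. jacobiP (k - m) (2 * real m + real CARD('n) - 2) s (1 - 2 * t) * Y x) | Y.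
         Y \<in> (harm m :: (real^'n \<Rightarrow> real) set)})"

definition Uspace :: "nat \<Rightarrow> nat \<Rightarrow> (real^'n \<Rightarrow> real \<Rightarrow> real) set" where
  "Uspace n s = lin_span (
      {(\<lambda>x t. Y x) | Y. Y \<in> (harm n :: (real^'n \<Rightarrow> real) set)}
    \<union> (\<Union>j\<in>{1..min (s - 1) n}.
        {(\<lambda>x t. jacobiP j (2 * real n - 2 * real j + real CARD('n) - 2) (- real s) (1 - 2 * t) * Y x)
           | Y. Y \<in> (harm (n - j) :: (real^'n \<Rightarrow> real) set)})
    \<union> (if s \<le> n then {(\<lambda>x t. (1 - t) ^ s * g x t) | g. g \<in> Vspace (n - s) (real s)}
       else {\<lambda>x t. 0}))"

text \<open>The operator D_gamma acting on the restriction to the cone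
  F(t,xi) = f(t xi, t) of a function f(x,t).\<close>
definition Dop :: "real \<Rightarrow> (real^'n \<Rightarrow> real \<Rightarrow> real) \<Rightarrow> real \<Rightarrow> real^'n \<Rightarrow> real" where
  "Dop \<gamma> f t \<xi> =
     t * (1 - t) * deriv (deriv (\<lambda>\<tau>. f (\<tau> *\<^sub>R \<xi>) \<tau>)) t
   + (real CARD('n) - 1 - (real CARD('n) + \<gamma>) * t) * deriv (\<lambda>\<tau>. f (\<tau> *\<^sub>R \<xi>) \<tau>) t
   + (1 / t) * sphere_LB (\<lambda>\<eta>. f (t *\<^sub>R \<eta>) t) \<xi>"

end

(* On the cone, a generator q(t) Y(x) with Y in H_m restricts to q(t) t^m Y(xi). Euler's identity
   and harmonicity give the spherical-harmonic eigenvalue: the Laplace-Beltrami operator multiplies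
   Y by -m(m+d-2) on the sphere. So D_gamma acts on q(t) Y(x) through an ordinary differential
   operator on h(t) = q(t) t^m. For q(t) = P_j^(2m+d-2,gamma)(1-2t), the quotient h(t)/t^m is a
   terminating Gauss hypergeometric series, which gives the eigenvalue -(m+j)(m+j+gamma+d-1).
   Multiplying h by (1-t)^s turns a solution for gamma = s into one for gamma = -s and shifts the
   eigenvalue by -s(d-1); this handles (1-t)^s V_(n-s). All generators of U_n then have eigenvalue
   -n(n-s+d-1). D_gamma is linear on functions that are twice differentiable along the cone, so
   the whole span has the same eigenvalue. *)

theory Submission
  imports Defs "HOL-Computational_Algebra.Polynomial"
begin

section \<open>Second derivatives on the real line\<close>

text \<open>\<open>deriv (deriv f) x\<close> is only meaningful if \<open>f\<close> is differentiable on a whole neighbourhood of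
  \<open>x\<close>, so the first derivative is required on an open set.\<close>

definition twice_differentiable_at :: "(real \<Rightarrow> real) \<Rightarrow> real \<Rightarrow> bool" where
  "twice_differentiable_at f x \<longleftrightarrow>
     (\<exists>S f'. open S \<and> x \<in> S \<and> (\<forall>y\<in>S. (f has_real_derivative f' y) (at y)) \<and> f' differentiable at x)"

lemma twice_differentiable_atI:
  assumes "open S" "x \<in> S" "\<And>y. y \<in> S \<Longrightarrow> (f has_real_derivative f' y) (at y)"
    and "(f' has_real_derivative f'') (at x)"
  shows "twice_differentiable_at f x" and "deriv f x = f' x" and "deriv (deriv f) x = f''"
proof -
  show "twice_differentiable_at f x"
    unfolding twice_differentiable_at_def using assms real_differentiable_def by blast
  show "deriv f x = f' x" using assms(2,3) by (simp add: DERIV_imp_deriv)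
  have "eventually (\<lambda>y. deriv f y = f' y) (nhds x)"
    using eventually_nhds_in_open[OF assms(1,2)] by eventually_elim (simp add: assms(3) DERIV_imp_deriv)
  then show "deriv (deriv f) x = f''"
    using deriv_cong_ev[of "deriv f" f' x x] DERIV_imp_deriv[OF assms(4)] by simp
qed

lemma twice_differentiable_at_lincomb:
  assumes "twice_differentiable_at f x" "twice_differentiable_at g x"
  shows "twice_differentiable_at (\<lambda>y. c * f y + g y) x"
    and "deriv (\<lambda>y. c * f y + g y) x = c * deriv f x + deriv g x"
    and "deriv (deriv (\<lambda>y. c * f y + g y)) x = c * deriv (deriv f) x + deriv (deriv g) x"
proof -
  obtain S f' T g' where S: "open S" "x \<in> S" "\<And>y. y \<in> S \<Longrightarrow> (f has_real_derivative f' y) (at y)"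
      and T: "open T" "x \<in> T" "\<And>y. y \<in> T \<Longrightarrow> (g has_real_derivative g' y) (at y)"
      and "f' differentiable at x" "g' differentiable at x"
    using assms unfolding twice_differentiable_at_def by metis
  then obtain f'' g'' where f'': "(f' has_real_derivative f'') (at x)"
      and g'': "(g' has_real_derivative g'') (at x)"
    using real_differentiable_def by metis
  note f = twice_differentiable_atI[OF S f''] and g = twice_differentiable_atI[OF T g'']
  have "open (S \<inter> T)" "x \<in> S \<inter> T" using S T by auto
  note fg = twice_differentiable_atI[OF this, of "\<lambda>y. c * f y + g y" "\<lambda>y. c * f' y + g' y"]
  have "((\<lambda>y. c * f y + g y) has_real_derivative c * f' y + g' y) (at y)" if "y \<in> S \<inter> T" for y
    using S(3) T(3) that by (auto intro!: derivative_eq_intros)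
  moreover have "((\<lambda>y. c * f' y + g' y) has_real_derivative c * f'' + g'') (at x)"
    using f'' g'' by (auto intro!: derivative_eq_intros)
  ultimately show "twice_differentiable_at (\<lambda>y. c * f y + g y) x"
    and "deriv (\<lambda>y. c * f y + g y) x = c * deriv f x + deriv g x"
    and "deriv (deriv (\<lambda>y. c * f y + g y)) x = c * deriv (deriv f) x + deriv (deriv g) x"
    using fg f g by simp_all
qed

lemma twice_differentiable_at_cmult:
  assumes "twice_differentiable_at f x"
  shows "twice_differentiable_at (\<lambda>y. c * f y) x"
    and "deriv (\<lambda>y. c * f y) x = c * deriv f x"
    and "deriv (deriv (\<lambda>y. c * f y)) x = c * deriv (deriv f) x"
proof -
  have zero: "twice_differentiable_at (\<lambda>_. 0) x" "deriv (\<lambda>_. 0) x = 0" "deriv (deriv (\<lambda>_. 0)) x = 0"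
    using twice_differentiable_atI[of UNIV x "\<lambda>_. 0" "\<lambda>_. 0" 0] by auto
  show "twice_differentiable_at (\<lambda>y. c * f y) x"
    and "deriv (\<lambda>y. c * f y) x = c * deriv f x"
    and "deriv (deriv (\<lambda>y. c * f y)) x = c * deriv (deriv f) x"
    using twice_differentiable_at_lincomb[OF assms zero(1), of c] zero by simp_all
qed

section \<open>Homogeneous polynomials and spherical harmonics\<close>

lemma hom_poly_homogeneous:
  assumes "hom_poly m (Y :: real^'n \<Rightarrow> real)"
  shows "Y (c *\<^sub>R x) = c ^ m * Y x"
proof -
  obtain A co where A: "\<forall>\<alpha>\<in>A. (\<Sum>i\<in>UNIV. \<alpha> i) = m"
    and Y: "Y = (\<lambda>x. \<Sum>\<alpha>\<in>A. co \<alpha> * (\<Prod>i\<in>UNIV. (x $ i) ^ (\<alpha> i)))"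
    using assms unfolding hom_poly_def by blast
  have "Y (c *\<^sub>R x) = (\<Sum>\<alpha>\<in>A. co \<alpha> * (c ^ (\<Sum>i\<in>UNIV. \<alpha> i) * (\<Prod>i\<in>UNIV. (x $ i) ^ (\<alpha> i))))"
    unfolding Y by (simp add: power_mult_distrib prod.distrib power_sum)
  also have "\<dots> = (\<Sum>\<alpha>\<in>A. c ^ m * (co \<alpha> * (\<Prod>i\<in>UNIV. (x $ i) ^ (\<alpha> i))))"
    using A by (intro sum.cong) auto
  also have "\<dots> = c ^ m * Y x"
    unfolding Y by (simp add: sum_distrib_left)
  finally show ?thesis .
qed

lemma hom_poly_on_line:
  assumes "hom_poly m (Y :: real^'n \<Rightarrow> real)"
  obtains p where "\<And>r. Y (a + r *\<^sub>R b) = poly p r"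
proof -
  obtain A co where Y: "Y = (\<lambda>x. \<Sum>\<alpha>\<in>A. co \<alpha> * (\<Prod>i\<in>UNIV. (x $ i) ^ (\<alpha> i)))"
    using assms unfolding hom_poly_def by blast
  show ?thesis
    by (rule that[of "\<Sum>\<alpha>\<in>A. smult (co \<alpha>) (\<Prod>i\<in>UNIV. [:a $ i, b $ i:] ^ (\<alpha> i))"])
       (simp add: Y poly_sum poly_prod algebra_simps)
qed

lemma monomial_deriv_along_axis:
  fixes \<xi> :: "real^'n" and \<alpha> :: "'n \<Rightarrow> nat" and i :: 'n
  defines "D \<equiv> real (\<alpha> i) * (\<xi> $ i) ^ (\<alpha> i - 1) * (\<Prod>j\<in>UNIV-{i}. (\<xi> $ j) ^ \<alpha> j)"
  shows "((\<lambda>r. \<Prod>j\<in>UNIV. ((\<xi> + r *\<^sub>R axis i 1) $ j) ^ \<alpha> j) has_real_derivative D) (at 0)"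
    and "\<xi> $ i * D = real (\<alpha> i) * (\<Prod>j\<in>UNIV. (\<xi> $ j) ^ \<alpha> j)"
proof -
  define R where "R = (\<Prod>j\<in>UNIV-{i}. (\<xi> $ j) ^ \<alpha> j)"
  have line: "(\<Prod>j\<in>UNIV. ((\<xi> + r *\<^sub>R axis i 1) $ j) ^ \<alpha> j) = (\<xi> $ i + r) ^ \<alpha> i * R" for r
  proof -
    have "(\<Prod>j\<in>UNIV. ((\<xi> + r *\<^sub>R axis i 1) $ j) ^ \<alpha> j)
        = ((\<xi> + r *\<^sub>R axis i 1) $ i) ^ \<alpha> i * (\<Prod>j\<in>UNIV-{i}. ((\<xi> + r *\<^sub>R axis i 1) $ j) ^ \<alpha> j)"
      by (subst prod.remove[of UNIV i]) auto
    also have "(\<Prod>j\<in>UNIV-{i}. ((\<xi> + r *\<^sub>R axis i 1) $ j) ^ \<alpha> j) = R"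
      unfolding R_def by (intro prod.cong) (auto simp: axis_def)
    finally show ?thesis by (simp add: axis_def)
  qed
  show "((\<lambda>r. \<Prod>j\<in>UNIV. ((\<xi> + r *\<^sub>R axis i 1) $ j) ^ \<alpha> j) has_real_derivative D) (at 0)"
    unfolding line D_def R_def[symmetric] by (auto intro!: derivative_eq_intros)
  show "\<xi> $ i * D = real (\<alpha> i) * (\<Prod>j\<in>UNIV. (\<xi> $ j) ^ \<alpha> j)"
    using line[of 0] unfolding D_def R_def[symmetric] by (cases "\<alpha> i") auto
qed

lemma hom_poly_euler:
  assumes "hom_poly m (Y :: real^'n \<Rightarrow> real)"
  shows "(\<Sum>i\<in>UNIV. \<xi> $ i * deriv (\<lambda>r. Y (\<xi> + r *\<^sub>R axis i 1)) 0) = real m * Y \<xi>"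
proof -
  obtain A co where A: "\<forall>\<alpha>\<in>A. (\<Sum>i\<in>UNIV. \<alpha> i) = m"
    and Y: "Y = (\<lambda>x. \<Sum>\<alpha>\<in>A. co \<alpha> * (\<Prod>i\<in>UNIV. (x $ i) ^ (\<alpha> i)))"
    using assms unfolding hom_poly_def by blast
  define M where "M \<alpha> = (\<Prod>j\<in>UNIV. (\<xi> $ j) ^ \<alpha> j)" for \<alpha> :: "'n \<Rightarrow> nat"
  define D where "D \<alpha> i = real (\<alpha> i) * (\<xi> $ i) ^ (\<alpha> i - 1) * (\<Prod>j\<in>UNIV-{i}. (\<xi> $ j) ^ \<alpha> j)"
    for \<alpha> :: "'n \<Rightarrow> nat" and i
  note monomial = monomial_deriv_along_axis[where \<xi> = \<xi>, folded D_def M_def]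
  have "deriv (\<lambda>r. Y (\<xi> + r *\<^sub>R axis i 1)) 0 = (\<Sum>\<alpha>\<in>A. co \<alpha> * D \<alpha> i)" for i
    unfolding Y by (intro DERIV_imp_deriv DERIV_sum DERIV_cmult monomial(1))
  then have "(\<Sum>i\<in>UNIV. \<xi> $ i * deriv (\<lambda>r. Y (\<xi> + r *\<^sub>R axis i 1)) 0)
      = (\<Sum>i\<in>UNIV. \<Sum>\<alpha>\<in>A. co \<alpha> * (\<xi> $ i * D \<alpha> i))"
    by (simp add: sum_distrib_left mult.left_commute)
  also have "\<dots> = (\<Sum>\<alpha>\<in>A. co \<alpha> * (real (\<Sum>i\<in>UNIV. \<alpha> i) * M \<alpha>))"
    by (subst sum.swap) (simp add: monomial(2) sum_distrib_left sum_distrib_right)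
  also have "\<dots> = real m * Y \<xi>"
    using A unfolding Y M_def by (simp add: sum_distrib_left algebra_simps)
  finally show ?thesis .
qed

lemma norm_unit_plus_axis:
  fixes \<xi> :: "real^'n"
  assumes "norm \<xi> = 1"
  shows "norm (\<xi> + r *\<^sub>R axis i 1) = sqrt (1 + 2 * r * \<xi> $ i + r\<^sup>2)"
proof -
  have "(norm (\<xi> + r *\<^sub>R axis i 1))\<^sup>2 = inner (\<xi> + r *\<^sub>R axis i 1) (\<xi> + r *\<^sub>R axis i 1)"
    by (simp add: power2_norm_eq_inner)
  also have "\<dots> = inner \<xi> \<xi> + 2 * r * \<xi> $ i + r\<^sup>2"
    by (simp add: inner_add_left inner_add_right inner_axis inner_axis' inner_axis_axis
        power2_eq_square algebra_simps)
  also have "inner \<xi> \<xi> = 1"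
    using assms by (simp add: power2_norm_eq_inner[symmetric])
  finally show ?thesis
    by (metis norm_ge_zero real_sqrt_unique)
qed

lemma unit_plus_axis_sq_pos:
  fixes \<xi> :: "real^'n"
  assumes "norm \<xi> = 1" "\<bar>r\<bar> < 1"
  shows "1 + 2 * r * \<xi> $ i + r\<^sup>2 > 0"
proof -
  have "\<bar>\<xi> $ i\<bar> \<le> 1"
    using component_le_norm_cart[of \<xi> i] assms by simp
  then have "\<bar>r * \<xi> $ i\<bar> \<le> \<bar>r\<bar>"
    by (simp add: abs_mult mult_left_le)
  moreover have "(1 - \<bar>r\<bar>)\<^sup>2 > 0"
    using assms by simp
  ultimately show ?thesis
    by (simp add: power2_eq_square algebra_simps abs_mult_self_eq abs_le_iff)
qed

lemma hom_poly_normalize_unit_plus_axis: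
  fixes Y :: "real^'n \<Rightarrow> real" and \<xi> :: "real^'n"
  assumes "hom_poly m Y" "norm \<xi> = 1" "\<bar>r\<bar> < 1"
  shows "Y ((1 / norm (\<xi> + r *\<^sub>R axis i 1)) *\<^sub>R (\<xi> + r *\<^sub>R axis i 1))
       = Y (\<xi> + r *\<^sub>R axis i 1) * (1 + 2 * r * \<xi> $ i + r\<^sup>2) powr (- (real m / 2))"
proof -
  define w where "w = 1 + 2 * r * \<xi> $ i + r\<^sup>2"
  have "w > 0"
    using unit_plus_axis_sq_pos[OF assms(2,3)] by (simp add: w_def)
  then have "(1 / sqrt w) ^ m = (w powr (- (1 / 2))) ^ m"
    by (simp add: powr_half_sqrt[symmetric] powr_minus_divide)
  also have "\<dots> = w powr (- (real m / 2))"
    using \<open>w > 0\<close> by (simp add: powr_realpow[symmetric] powr_powr)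
  finally show ?thesis
    using hom_poly_homogeneous[OF assms(1)] norm_unit_plus_axis[OF assms(2)]
    unfolding w_def by simp
qed

definition sphere_twice_differentiable :: "(real^'n \<Rightarrow> real) \<Rightarrow> real^'n \<Rightarrow> bool" where
  "sphere_twice_differentiable f \<xi> \<longleftrightarrow>
     (\<forall>i. twice_differentiable_at (\<lambda>r. f ((1 / norm (\<xi> + r *\<^sub>R axis i 1)) *\<^sub>R (\<xi> + r *\<^sub>R axis i 1))) 0)"

lemma sphere_LB_lincomb:
  assumes "sphere_twice_differentiable f \<xi>" "sphere_twice_differentiable g \<xi>"
  shows "sphere_twice_differentiable (\<lambda>\<eta>. c * f \<eta> + g \<eta>) \<xi>"
    and "sphere_LB (\<lambda>\<eta>. c * f \<eta> + g \<eta>) \<xi> = c * sphere_LB f \<xi> + sphere_LB g \<xi>"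
  using assms twice_differentiable_at_lincomb
  by (auto simp: sphere_twice_differentiable_def sphere_LB_def laplacian_def sum.distrib sum_distrib_left)

lemma sphere_LB_cmult:
  assumes "sphere_twice_differentiable f \<xi>"
  shows "sphere_twice_differentiable (\<lambda>\<eta>. c * f \<eta>) \<xi>"
    and "sphere_LB (\<lambda>\<eta>. c * f \<eta>) \<xi> = c * sphere_LB f \<xi>"
  using assms twice_differentiable_at_cmult
  by (auto simp: sphere_twice_differentiable_def sphere_LB_def laplacian_def sum_distrib_left)

lemma hom_poly_sphere_axis_deriv2:
  fixes Y :: "real^'n \<Rightarrow> real" and \<xi> :: "real^'n" and i :: 'n
  assumes "hom_poly m Y" "norm \<xi> = 1"
  defines "Ys \<equiv> \<lambda>r. Y ((1 / norm (\<xi> + r *\<^sub>R axis i 1)) *\<^sub>R (\<xi> + r *\<^sub>R axis i 1))"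
    and "Yl \<equiv> \<lambda>r. Y (\<xi> + r *\<^sub>R axis i 1)"
  shows "twice_differentiable_at Ys 0"
    and "deriv (deriv Ys) 0 = deriv (deriv Yl) 0 - 2 * real m * \<xi> $ i * deriv Yl 0
           + Y \<xi> * (real m * (real m + 2) * (\<xi> $ i)\<^sup>2 - real m)"
proof -
  obtain p where p: "\<And>r. Yl r = poly p r"
    using hom_poly_on_line[OF assms(1)] unfolding Yl_def by blast
  have deriv_poly: "deriv (poly q) = poly (pderiv q)" for q :: "real poly"
    by (rule ext, rule DERIV_imp_deriv, rule poly_DERIV)
  define a where "a = \<xi> $ i"
  define w where "w r = 1 + 2 * r * a + r\<^sup>2" for r
  define e where "e = - (real m / 2)"
  have w_pos: "w r > 0" if "r \<in> ball 0 1" for r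
    using unit_plus_axis_sq_pos[OF assms(2)] that unfolding w_def a_def by simp
  have Ys_eq: "Ys r = poly p r * w r powr e" if "r \<in> ball 0 1" for r
    using hom_poly_normalize_unit_plus_axis[OF assms(1,2), of r i] that p
    unfolding Ys_def Yl_def w_def a_def e_def by simp
  define Ys' where "Ys' r = poly (pderiv p) r * w r powr e
     + poly p r * (e * w r powr (e - 1) * (2 * a + 2 * r))" for r
  have "(Ys has_real_derivative Ys' r) (at r)" if "r \<in> ball 0 1" for r
  proof (rule has_field_derivative_transform_within_open[where f="\<lambda>r. poly p r * w r powr e" and S="ball 0 1"])
    show "((\<lambda>r. poly p r * w r powr e) has_real_derivative Ys' r) (at r)"
      using w_pos[OF that] unfolding Ys'_def w_def
      by (auto intro!: derivative_eq_intros simp: algebra_simps)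
  qed (use that Ys_eq in auto)
  moreover have "(Ys' has_real_derivative
      poly (pderiv (pderiv p)) 0 + 2 * poly (pderiv p) 0 * (e * (2 * a))
       + poly p 0 * (e * (e - 1) * (2 * a)\<^sup>2 + e * 2)) (at 0)"
    using w_pos[of 0] unfolding Ys'_def w_def
    by (auto intro!: derivative_eq_intros simp: algebra_simps power2_eq_square)
  moreover have "poly (pderiv (pderiv p)) 0 + 2 * poly (pderiv p) 0 * (e * (2 * a))
       + poly p 0 * (e * (e - 1) * (2 * a)\<^sup>2 + e * 2)
      = deriv (deriv Yl) 0 - 2 * real m * \<xi> $ i * deriv Yl 0
           + Y \<xi> * (real m * (real m + 2) * (\<xi> $ i)\<^sup>2 - real m)"
  proof -
    have "Y \<xi> = poly p 0"
      using p[of 0] by (simp add: Yl_def)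
    then show ?thesis
      unfolding p[abs_def] deriv_poly by (simp add: e_def a_def power2_eq_square algebra_simps)
  qed
  ultimately show "twice_differentiable_at Ys 0"
    and "deriv (deriv Ys) 0 = deriv (deriv Yl) 0 - 2 * real m * \<xi> $ i * deriv Yl 0
           + Y \<xi> * (real m * (real m + 2) * (\<xi> $ i)\<^sup>2 - real m)"
    using twice_differentiable_atI[of "ball 0 1" 0 Ys Ys'] by auto
qed

lemma sum_sq_components_unit:
  fixes \<xi> :: "real^'n"
  assumes "norm \<xi> = 1"
  shows "(\<Sum>i\<in>UNIV. (\<xi> $ i)\<^sup>2) = 1"
  using assms by (simp add: norm_eq_sqrt_inner inner_vec_def power2_eq_square)

lemma sphere_LB_harm:
  fixes Y :: "real^'n \<Rightarrow> real"
  assumes "Y \<in> harm m" "norm \<xi> = 1"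
  shows "sphere_twice_differentiable Y \<xi>"
    and "sphere_LB Y \<xi> = - (real m * (real m + real CARD('n) - 2)) * Y \<xi>"
proof -
  have hom: "hom_poly m Y" and harmonic: "laplacian Y \<xi> = 0"
    using assms(1) unfolding harm_def by auto
  note axis = hom_poly_sphere_axis_deriv2[OF hom assms(2)]
  show "sphere_twice_differentiable Y \<xi>"
    unfolding sphere_twice_differentiable_def using axis(1) by blast
  define D1 where "D1 i = deriv (\<lambda>r. Y (\<xi> + r *\<^sub>R axis i 1)) 0" for i
  define D2 where "D2 i = deriv (deriv (\<lambda>r. Y (\<xi> + r *\<^sub>R axis i 1))) 0" for i
  have "sphere_LB Y \<xi> = (\<Sum>i\<in>UNIV. D2 i - 2 * real m * (\<xi> $ i * D1 i)
      + real m * (real m + 2) * Y \<xi> * (\<xi> $ i)\<^sup>2 - real m * Y \<xi>)"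
    unfolding sphere_LB_def laplacian_def axis(2) D1_def D2_def
    by (intro sum.cong refl) (simp add: algebra_simps)
  also have "\<dots> = (\<Sum>i\<in>UNIV. D2 i) - 2 * real m * (\<Sum>i\<in>UNIV. \<xi> $ i * D1 i)
      + real m * (real m + 2) * Y \<xi> * (\<Sum>i\<in>UNIV. (\<xi> $ i)\<^sup>2) - real CARD('n) * (real m * Y \<xi>)"
    by (simp add: sum.distrib sum_subtractf sum_distrib_left)
  also have "\<dots> = - (real m * (real m + real CARD('n) - 2)) * Y \<xi>"
    using harmonic hom_poly_euler[OF hom, of \<xi>] sum_sq_components_unit[OF assms(2)]
    unfolding laplacian_def D1_def D2_def by (simp add: algebra_simps)
  finally show "sphere_LB Y \<xi> = - (real m * (real m + real CARD('n) - 2)) * Y \<xi>" .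
qed

section \<open>Linearity of the operator on the cone\<close>

definition cone_twice_differentiable :: "(real^'n \<Rightarrow> real \<Rightarrow> real) \<Rightarrow> real \<Rightarrow> real^'n \<Rightarrow> bool" where
  "cone_twice_differentiable Z t \<xi> \<longleftrightarrow>
     twice_differentiable_at (\<lambda>\<tau>. Z (\<tau> *\<^sub>R \<xi>) \<tau>) t \<and> sphere_twice_differentiable (\<lambda>\<eta>. Z (t *\<^sub>R \<eta>) t) \<xi>"

lemma Dop_lincomb:
  assumes "cone_twice_differentiable f t \<xi>" "cone_twice_differentiable g t \<xi>"
  shows "cone_twice_differentiable (\<lambda>x t. c * f x t + g x t) t \<xi>"
    and "Dop \<gamma> (\<lambda>x t. c * f x t + g x t) t \<xi> = c * Dop \<gamma> f t \<xi> + Dop \<gamma> g t \<xi>"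
proof -
  note radial = twice_differentiable_at_lincomb[of "\<lambda>\<tau>. f (\<tau> *\<^sub>R \<xi>) \<tau>" t "\<lambda>\<tau>. g (\<tau> *\<^sub>R \<xi>) \<tau>" c]
  note sphere = sphere_LB_lincomb[of "\<lambda>\<eta>. f (t *\<^sub>R \<eta>) t" \<xi> "\<lambda>\<eta>. g (t *\<^sub>R \<eta>) t" c]
  show "cone_twice_differentiable (\<lambda>x t. c * f x t + g x t) t \<xi>"
    using assms radial(1) sphere(1) unfolding cone_twice_differentiable_def by blast
  show "Dop \<gamma> (\<lambda>x t. c * f x t + g x t) t \<xi> = c * Dop \<gamma> f t \<xi> + Dop \<gamma> g t \<xi>"
    using assms radial(2,3) sphere(2) unfolding cone_twice_differentiable_def Dop_def
    by (simp add: algebra_simps)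
qed

definition Dop_eigenfunction :: "real \<Rightarrow> real \<Rightarrow> (real^'n \<Rightarrow> real \<Rightarrow> real) \<Rightarrow> bool" where
  "Dop_eigenfunction \<gamma> \<mu> Z \<longleftrightarrow> (\<forall>t \<xi>. 0 < t \<and> norm \<xi> = 1 \<longrightarrow>
     cone_twice_differentiable Z t \<xi> \<and> Dop \<gamma> Z t \<xi> = \<mu> * Z (t *\<^sub>R \<xi>) t)"

lemma Dop_eigenfunction_zero: "Dop_eigenfunction \<gamma> \<mu> (\<lambda>x t. 0)"
proof -
  have "twice_differentiable_at (\<lambda>_. 0) x" "deriv (\<lambda>_. 0) x = 0" "deriv (deriv (\<lambda>_. 0)) x = 0"
    for x :: real
    using twice_differentiable_atI[of UNIV x "\<lambda>_. 0" "\<lambda>_. 0" 0] by auto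
  then show ?thesis
    by (simp add: Dop_eigenfunction_def cone_twice_differentiable_def sphere_twice_differentiable_def
        Dop_def sphere_LB_def laplacian_def)
qed

lemma Dop_eigenfunction_lincomb:
  fixes f g :: "real^'n \<Rightarrow> real \<Rightarrow> real"
  assumes "Dop_eigenfunction \<gamma> \<mu> f" "Dop_eigenfunction \<gamma> \<mu> g"
  shows "Dop_eigenfunction \<gamma> \<mu> (\<lambda>x t. c * f x t + g x t)"
  unfolding Dop_eigenfunction_def
proof (intro allI impI)
  fix t :: real and \<xi> :: "real^'n"
  assume "0 < t \<and> norm \<xi> = 1"
  then have "cone_twice_differentiable f t \<xi>" "cone_twice_differentiable g t \<xi>"
    and "Dop \<gamma> f t \<xi> = \<mu> * f (t *\<^sub>R \<xi>) t" "Dop \<gamma> g t \<xi> = \<mu> * g (t *\<^sub>R \<xi>) t"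
    using assms unfolding Dop_eigenfunction_def by auto
  then show "cone_twice_differentiable (\<lambda>x t. c * f x t + g x t) t \<xi> \<and>
      Dop \<gamma> (\<lambda>x t. c * f x t + g x t) t \<xi> = \<mu> * (c * f (t *\<^sub>R \<xi>) t + g (t *\<^sub>R \<xi>) t)"
    using Dop_lincomb(1)[of f t \<xi> g c] Dop_lincomb(2)[of f t \<xi> g \<gamma> c] by (simp add: algebra_simps)
qed

lemma lin_span_induct [consumes 1, case_names zero lincomb]:
  assumes "Z \<in> lin_span S"
    and "P (\<lambda>x t. 0)"
    and "\<And>c f g. f \<in> S \<Longrightarrow> P g \<Longrightarrow> P (\<lambda>x t. c * f x t + g x t)"
  shows "P Z"
proof -
  obtain A c where "finite A" "A \<subseteq> S" and Z: "Z = (\<lambda>x t. \<Sum>g\<in>A. c g * g x t)"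
    using assms(1) unfolding lin_span_def by blast
  then show ?thesis
  proof (induction A arbitrary: Z rule: finite_induct)
    case empty
    then show ?case using assms(2) by simp
  next
    case (insert f A)
    then show ?case
      using assms(3)[of f "\<lambda>x t. \<Sum>g\<in>A. c g * g x t" "c f"] by simp
  qed
qed

lemma Dop_eigenfunction_lin_span:
  assumes "Z \<in> lin_span S" "\<And>g. g \<in> S \<Longrightarrow> Dop_eigenfunction \<gamma> \<mu> g"
  shows "Dop_eigenfunction \<gamma> \<mu> Z"
  using assms(1)
proof (induction rule: lin_span_induct)
  case zero
  then show ?case by (rule Dop_eigenfunction_zero)
next
  case (lincomb c f g)
  then show ?case by (rule Dop_eigenfunction_lincomb[OF assms(2)])
qed

section \<open>The radial equation\<close>

text \<open>For \<open>h t = q t * t ^ m\<close> this is \<open>t\<close> times the equation \<open>D\<^sub>\<gamma> (q Y) = \<mu> q Y\<close> for \<open>Y\<close> in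
  \<open>H\<^sub>m\<close>, after the spherical part \<open>-m(m+d-2) h t / t\<close> has been evaluated.\<close>

definition radial_eigen :: "nat \<Rightarrow> real \<Rightarrow> nat \<Rightarrow> real \<Rightarrow> (real \<Rightarrow> real) \<Rightarrow> bool" where
  "radial_eigen d \<gamma> m \<mu> h \<longleftrightarrow> (\<exists>h' h''.
     (\<forall>t. (h has_real_derivative h' t) (at t)) \<and> (\<forall>t. (h' has_real_derivative h'' t) (at t)) \<and>
     (\<forall>t. t * (t * (1 - t) * h'' t + (real d - 1 - (real d + \<gamma>) * t) * h' t)
            - real m * (real m + real d - 2) * h t = \<mu> * t * h t))"

lemma Dop_eigenfunction_of_radial_eigen:
  fixes Y :: "real^'n \<Rightarrow> real" and q :: "real \<Rightarrow> real"
  assumes "Y \<in> harm m" "radial_eigen CARD('n) \<gamma> m \<mu> (\<lambda>t. q t * t ^ m)"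
  shows "Dop_eigenfunction \<gamma> \<mu> (\<lambda>x t. q t * Y x)"
  unfolding Dop_eigenfunction_def
proof (intro allI impI)
  fix t :: real and \<xi> :: "real^'n"
  assume "0 < t \<and> norm \<xi> = 1"
  then have t: "t > 0" and \<xi>: "norm \<xi> = 1" by auto
  define h where "h t = q t * t ^ m" for t
  define d where "d = real CARD('n)"
  obtain h' h'' where dh: "\<And>t. (h has_real_derivative h' t) (at t)"
      and dh': "\<And>t. (h' has_real_derivative h'' t) (at t)"
      and ode: "t * (t * (1 - t) * h'' t + (d - 1 - (d + \<gamma>) * t) * h' t)
                 - real m * (real m + d - 2) * h t = \<mu> * t * h t"
    using assms(2) unfolding radial_eigen_def h_def[symmetric] d_def by blast
  have hom: "hom_poly m Y"
    using assms(1) by (simp add: harm_def)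
  have radial: "(\<lambda>\<tau>. q \<tau> * Y (\<tau> *\<^sub>R \<xi>)) = (\<lambda>\<tau>. Y \<xi> * h \<tau>)"
    by (simp add: h_def hom_poly_homogeneous[OF hom] mult_ac)
  have sphere: "(\<lambda>\<eta>. q t * Y (t *\<^sub>R \<eta>)) = (\<lambda>\<eta>. h t * Y \<eta>)"
    by (simp add: h_def hom_poly_homogeneous[OF hom] mult_ac)
  note h = twice_differentiable_atI[of UNIV t h h' "h'' t"]
  note radial_deriv = twice_differentiable_at_cmult[of h t "Y \<xi>"]
  note LB = sphere_LB_harm[OF assms(1) \<xi>]
  note LB_cmult = sphere_LB_cmult[OF LB(1), of "h t"]
  show "cone_twice_differentiable (\<lambda>x t. q t * Y x) t \<xi> \<and>
      Dop \<gamma> (\<lambda>x t. q t * Y x) t \<xi> = \<mu> * (q t * Y (t *\<^sub>R \<xi>))"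
  proof
    show "cone_twice_differentiable (\<lambda>x t. q t * Y x) t \<xi>"
      unfolding cone_twice_differentiable_def radial sphere using h dh dh' radial_deriv LB_cmult by auto
    have "Dop \<gamma> (\<lambda>x t. q t * Y x) t \<xi>
        = (t * (1 - t) * h'' t + (d - 1 - (d + \<gamma>) * t) * h' t
           - real m * (real m + d - 2) * h t / t) * Y \<xi>"
      unfolding Dop_def radial sphere LB_cmult(2) LB(2) d_def[symmetric]
      using h dh dh' radial_deriv t by (simp add: field_simps)
    also have "\<dots> = \<mu> * (q t * Y (t *\<^sub>R \<xi>))"
      using ode t by (simp add: field_simps h_def hom_poly_homogeneous[OF hom])
    finally show "Dop \<gamma> (\<lambda>x t. q t * Y x) t \<xi> = \<mu> * (q t * Y (t *\<^sub>R \<xi>))" .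
  qed
qed

lemma radial_eigen_mult_power:
  assumes dy: "\<And>t. (y has_real_derivative y' t) (at t)"
    and dy': "\<And>t. (y' has_real_derivative y'' t) (at t)"
    and ode: "\<And>t. t * (1 - t) * y'' t + (2 * real m + real d - 1 - (2 * real m + real d + \<gamma>) * t) * y' t
                  = \<nu> * y t"
  shows "radial_eigen d \<gamma> m (\<nu> - real m * (real m + \<gamma> + real d - 1)) (\<lambda>t. y t * t ^ m)"
proof -
  define h' where "h' t = y t * (real m * t ^ (m - Suc 0)) + y' t * t ^ m" for t
  define h'' where "h'' t = (y t * (real m * (real (m - Suc 0) * t ^ (m - Suc 0 - Suc 0)))
     + y' t * (real m * t ^ (m - Suc 0))) + (y' t * (real m * t ^ (m - Suc 0)) + y'' t * t ^ m)" for t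
  have "((\<lambda>t. y t * t ^ m) has_real_derivative h' t) (at t)" for t
    unfolding h'_def by (rule DERIV_mult'[OF dy DERIV_pow])
  moreover have "(h' has_real_derivative h'' t) (at t)" for t
    unfolding h'_def[abs_def] h''_def by (intro DERIV_add DERIV_mult' dy dy' DERIV_cmult DERIV_pow)
  moreover have "t * (t * (1 - t) * h'' t + (real d - 1 - (real d + \<gamma>) * t) * h' t)
      - real m * (real m + real d - 2) * (y t * t ^ m)
      = (\<nu> - real m * (real m + \<gamma> + real d - 1)) * t * (y t * t ^ m)" for t
  proof -
    have "t * (t * (1 - t) * h'' t + (real d - 1 - (real d + \<gamma>) * t) * h' t)
      - real m * (real m + real d - 2) * (y t * t ^ m)
      = t ^ m * t * (t * (1 - t) * y'' t + (2 * real m + real d - 1 - (2 * real m + real d + \<gamma>) * t) * y' t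
          - real m * (real m + \<gamma> + real d - 1) * y t)"
    proof (cases m)
      case (Suc m')
      then show ?thesis
        unfolding h'_def h''_def by (cases m') (simp_all add: algebra_simps)
    qed (simp add: h'_def h''_def algebra_simps)
    also have "\<dots> = t ^ m * t * (\<nu> * y t - real m * (real m + \<gamma> + real d - 1) * y t)"
      by (simp only: ode)
    finally show ?thesis
      by (simp add: algebra_simps)
  qed
  ultimately show ?thesis
    unfolding radial_eigen_def by blast
qed

lemma radial_eigen_mult_one_minus_power:
  assumes "radial_eigen d (real s) m \<mu> h"
  shows "radial_eigen d (- real s) m (\<mu> - real s * (real d - 1)) (\<lambda>t. (1 - t) ^ s * h t)"
proof -
  obtain h' h'' where dh: "\<And>t. (h has_real_derivative h' t) (at t)"
      and dh': "\<And>t. (h' has_real_derivative h'' t) (at t)"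
      and ode: "\<And>t. t * (t * (1 - t) * h'' t + (real d - 1 - (real d + real s) * t) * h' t)
                 - real m * (real m + real d - 2) * h t = \<mu> * t * h t"
    using assms unfolding radial_eigen_def by blast
  define u where "u t = (1 - t) ^ s" for t :: real
  define u' where "u' t = - (real s * (1 - t) ^ (s - 1))" for t :: real
  define u'' where "u'' t = real s * (real (s - 1) * (1 - t) ^ (s - 1 - 1))" for t :: real
  have du: "(u has_real_derivative u' t) (at t)" for t
    unfolding u_def[abs_def] u'_def by (auto intro!: derivative_eq_intros)
  have du': "(u' has_real_derivative u'' t) (at t)" for t
    unfolding u'_def[abs_def] u''_def by (auto intro!: derivative_eq_intros)
  define H' where "H' t = u t * h' t + u' t * h t" for t
  define H'' where "H'' t = (u t * h'' t + u' t * h' t) + (u' t * h' t + u'' t * h t)" for t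
  have "((\<lambda>t. u t * h t) has_real_derivative H' t) (at t)" for t
    unfolding H'_def by (rule DERIV_mult'[OF du dh])
  moreover have "(H' has_real_derivative H'' t) (at t)" for t
    unfolding H'_def[abs_def] H''_def by (intro DERIV_add DERIV_mult' du du' dh dh')
  moreover have "t * (t * (1 - t) * H'' t + (real d - 1 - (real d + - real s) * t) * H' t)
      - real m * (real m + real d - 2) * (u t * h t)
      = (\<mu> - real s * (real d - 1)) * t * (u t * h t)" for t
  proof -
    \<comment> \<open>These two identities hold for every \<open>s\<close>: for \<open>s \<le> 1\<close> the truncated exponents
      \<open>s - 1\<close> and \<open>s - 1 - 1\<close> only occur multiplied by \<open>real s\<close> or \<open>real (s - 1)\<close>.\<close>
    have "(1 - t) * u' t = - real s * u t"
      unfolding u_def u'_def by (cases s) (auto simp: algebra_simps)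
    moreover have "t * (1 - t) * u'' t + (real d - 1 - (real d - real s) * t) * u' t
        = - (real s * (real d - 1)) * u t"
    proof (cases s)
      case (Suc s')
      then show ?thesis
        unfolding u_def u'_def u''_def by (cases s') (simp_all add: algebra_simps)
    qed (simp add: u_def u'_def u''_def)
    ultimately show ?thesis
      using ode[of t] unfolding H'_def H''_def by algebra
  qed
  ultimately show ?thesis
    unfolding radial_eigen_def u_def by blast
qed

section \<open>Jacobi polynomials\<close>

lemma hypergeometric_poly_ode:
  fixes c :: "nat \<Rightarrow> real" and \<alpha> \<beta> \<gamma> t :: real
  assumes rec: "\<And>k. k < j \<Longrightarrow>
      c (Suc k) * real (Suc k) * (real k + \<gamma>) = c k * (real k + \<alpha>) * (real k + \<beta>)"
    and stop: "c j * (real j + \<alpha>) * (real j + \<beta>) = 0"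
  defines "y \<equiv> \<lambda>t. \<Sum>k\<le>j. c k * t ^ k"
    and "y' \<equiv> \<lambda>t. \<Sum>k<j. c (Suc k) * real (Suc k) * t ^ k"
    and "y'' \<equiv> \<lambda>t. \<Sum>k<j. c (Suc k) * real (Suc k) * (real k * t ^ (k - 1))"
  shows "(y has_real_derivative y' t) (at t)"
    and "(y' has_real_derivative y'' t) (at t)"
    and "t * (1 - t) * y'' t + (\<gamma> - (\<alpha> + \<beta> + 1) * t) * y' t = \<alpha> * \<beta> * y t"
proof -
  have "(y has_real_derivative (\<Sum>k\<le>j. c k * (real k * t ^ (k - 1)))) (at t)"
    unfolding y_def by (auto intro!: derivative_eq_intros sum.cong)
  moreover have "(\<Sum>k\<le>j. c k * (real k * t ^ (k - 1))) = y' t"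
    unfolding y'_def by (subst sum.atMost_shift) (simp add: mult.assoc)
  ultimately show "(y has_real_derivative y' t) (at t)" by simp
  show "(y' has_real_derivative y'' t) (at t)"
    unfolding y'_def y''_def by (auto intro!: derivative_eq_intros sum.cong)
  have t_monomial: "t * (x * (real k * t ^ (k - 1))) = x * real k * t ^ k" for x k
    by (cases k) auto
  have t_y'': "t * y'' t = (\<Sum>k<j. c (Suc k) * real (Suc k) * real k * t ^ k)"
    unfolding y''_def sum_distrib_left by (simp only: t_monomial)
  have "t * (1 - t) * y'' t + (\<gamma> - (\<alpha> + \<beta> + 1) * t) * y' t
      = (1 - t) * (t * y'' t) + (\<gamma> - (\<alpha> + \<beta> + 1) * t) * y' t"
    by simp
  also have "\<dots> = (\<Sum>k<j. (1 - t) * (c (Suc k) * real (Suc k) * real k * t ^ k)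
      + (\<gamma> - (\<alpha> + \<beta> + 1) * t) * (c (Suc k) * real (Suc k) * t ^ k))"
    unfolding t_y'' y'_def by (simp only: sum_distrib_left sum.distrib)
  also have "\<dots> = (\<Sum>k<j. c (Suc k) * real (Suc k) * (real k + \<gamma>) * t ^ k
      - c (Suc k) * real (Suc k) * (real k + \<alpha> + \<beta> + 1) * t ^ Suc k)"
    by (intro sum.cong refl) (simp add: algebra_simps)
  also have "\<dots> = (\<Sum>k<j. c (Suc k) * real (Suc k) * (real k + \<gamma>) * t ^ k)
      - (\<Sum>k<j. c (Suc k) * real (Suc k) * (real k + \<alpha> + \<beta> + 1) * t ^ Suc k)"
    by (rule sum_subtractf)
  also have "(\<Sum>k<j. c (Suc k) * real (Suc k) * (real k + \<gamma>) * t ^ k)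
      = (\<Sum>k<j. c k * (real k + \<alpha>) * (real k + \<beta>) * t ^ k)"
    by (intro sum.cong refl) (simp only: lessThan_iff rec)
  also have "\<dots> = (\<Sum>k\<le>j. c k * (real k + \<alpha>) * (real k + \<beta>) * t ^ k)"
    by (simp add: lessThan_Suc_atMost[symmetric] stop)
  also have "(\<Sum>k<j. c (Suc k) * real (Suc k) * (real k + \<alpha> + \<beta> + 1) * t ^ Suc k)
      = (\<Sum>k\<le>j. c k * real k * (real k + \<alpha> + \<beta>) * t ^ k)"
    by (subst sum.atMost_shift) (simp add: algebra_simps)
  also have "(\<Sum>k\<le>j. c k * (real k + \<alpha>) * (real k + \<beta>) * t ^ k)
      - (\<Sum>k\<le>j. c k * real k * (real k + \<alpha> + \<beta>) * t ^ k) = \<alpha> * \<beta> * y t"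
    unfolding y_def sum_distrib_left sum_subtractf[symmetric]
    by (intro sum.cong refl) (simp add: algebra_simps)
  finally show "t * (1 - t) * y'' t + (\<gamma> - (\<alpha> + \<beta> + 1) * t) * y' t = \<alpha> * \<beta> * y t" .
qed

definition jacobi_coeff :: "nat \<Rightarrow> real \<Rightarrow> real \<Rightarrow> nat \<Rightarrow> real" where
  "jacobi_coeff j a b k = pochhammer (a + real k + 1) (j - k) * pochhammer (- real j) k
      * pochhammer (real j + a + b + 1) k / (fact j * fact k)"

lemma jacobiP_eq_sum_coeff: "jacobiP j a b (1 - 2 * t) = (\<Sum>k\<le>j. jacobi_coeff j a b k * t ^ k)"
  unfolding jacobiP_def jacobi_coeff_def by (simp add: atLeast0AtMost)

lemma jacobi_coeff_Suc:
  assumes "k < j"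
  shows "jacobi_coeff j a b (Suc k) * real (Suc k) * (real k + a + 1)
       = jacobi_coeff j a b k * (real k - real j) * (real k + real j + a + b + 1)"
proof -
  have "j - k = Suc (j - Suc k)"
    using assms by simp
  then have p1: "pochhammer (a + real k + 1) (j - k)
      = (a + real k + 1) * pochhammer (a + real (Suc k) + 1) (j - Suc k)"
    by (simp add: pochhammer_rec add_ac)
  have p2: "pochhammer (- real j) (Suc k) = pochhammer (- real j) k * (real k - real j)"
    by (simp add: pochhammer_Suc)
  have p3: "pochhammer (real j + a + b + 1) (Suc k)
      = pochhammer (real j + a + b + 1) k * (real k + real j + a + b + 1)"
    by (simp add: pochhammer_Suc algebra_simps)
  have "fact (Suc k) = real (Suc k) * (fact k :: real)"
    by simp
  then show ?thesis
    unfolding jacobi_coeff_def p1 p2 p3 by (simp add: field_simps add_ac del: of_nat_Suc)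
qed

text \<open>\<open>jacobiP j a b (1 - 2 t)\<close> is the terminating series \<open>\<^sub>2F\<^sub>1(-j, j+a+b+1; a+1; t)\<close>.\<close>

lemma jacobiP_ode:
  obtains y' y'' where "\<And>t. ((\<lambda>t. jacobiP j a b (1 - 2 * t)) has_real_derivative y' t) (at t)"
    and "\<And>t. (y' has_real_derivative y'' t) (at t)"
    and "\<And>t. t * (1 - t) * y'' t + (a + 1 - (a + b + 2) * t) * y' t
             = - (real j * (real j + a + b + 1)) * jacobiP j a b (1 - 2 * t)"
proof -
  let ?c = "jacobi_coeff j a b"
  define y' where "y' t = (\<Sum>k<j. ?c (Suc k) * real (Suc k) * t ^ k)" for t
  define y'' where "y'' t = (\<Sum>k<j. ?c (Suc k) * real (Suc k) * (real k * t ^ (k - 1)))" for t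
  have rec: "?c (Suc k) * real (Suc k) * (real k + (a + 1))
      = ?c k * (real k + - real j) * (real k + (real j + a + b + 1))" if "k < j" for k
    using jacobi_coeff_Suc[OF that, of a b] by (simp only: add.assoc diff_conv_add_uminus)
  have "?c j * (real j + - real j) * (real j + (real j + a + b + 1)) = 0"
    by simp
  note ode = hypergeometric_poly_ode[of j ?c "a + 1" "- real j" "real j + a + b + 1", OF rec this,
      folded y'_def y''_def jacobiP_eq_sum_coeff]
  show ?thesis
  proof (rule that[of y' y''])
    show "t * (1 - t) * y'' t + (a + 1 - (a + b + 2) * t) * y' t
        = - (real j * (real j + a + b + 1)) * jacobiP j a b (1 - 2 * t)" for t
      using ode(3)[of t] by (simp add: algebra_simps)
  qed (use ode in auto)
qed

lemma jacobi_radial_eigen: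
  "radial_eigen d \<gamma> m (- ((real m + real j) * (real m + real j + \<gamma> + real d - 1)))
     (\<lambda>t. jacobiP j (2 * real m + real d - 2) \<gamma> (1 - 2 * t) * t ^ m)"
proof -
  let ?a = "2 * real m + real d - 2"
  obtain y' y'' where dy: "\<And>t. ((\<lambda>t. jacobiP j ?a \<gamma> (1 - 2 * t)) has_real_derivative y' t) (at t)"
      and dy': "\<And>t. (y' has_real_derivative y'' t) (at t)"
      and ode: "\<And>t. t * (1 - t) * y'' t + (?a + 1 - (?a + \<gamma> + 2) * t) * y' t
                  = - (real j * (real j + ?a + \<gamma> + 1)) * jacobiP j ?a \<gamma> (1 - 2 * t)"
    using jacobiP_ode by blast
  have "?a + 1 = 2 * real m + real d - 1" "?a + \<gamma> + 2 = 2 * real m + real d + \<gamma>"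
    by simp_all
  with ode have "radial_eigen d \<gamma> m (- (real j * (real j + ?a + \<gamma> + 1)) - real m * (real m + \<gamma> + real d - 1))
      (\<lambda>t. jacobiP j ?a \<gamma> (1 - 2 * t) * t ^ m)"
    using radial_eigen_mult_power[OF dy dy'] by simp
  moreover have "- (real j * (real j + ?a + \<gamma> + 1)) - real m * (real m + \<gamma> + real d - 1)
      = - ((real m + real j) * (real m + real j + \<gamma> + real d - 1))"
    by (simp add: algebra_simps)
  ultimately show ?thesis
    by simp
qed

lemma Dop_eigenfunction_jacobi_harm:
  fixes Y :: "real^'n \<Rightarrow> real"
  assumes "Y \<in> harm m"
  shows "Dop_eigenfunction \<gamma> (- ((real m + real j) * (real m + real j + \<gamma> + real CARD('n) - 1)))
           (\<lambda>x t. jacobiP j (2 * real m + real CARD('n) - 2) \<gamma> (1 - 2 * t) * Y x)"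
  by (rule Dop_eigenfunction_of_radial_eigen[OF assms jacobi_radial_eigen])

lemma Dop_eigenfunction_Vspace_shift:
  fixes g :: "real^'n \<Rightarrow> real \<Rightarrow> real"
  assumes "g \<in> Vspace k (real s)"
  shows "Dop_eigenfunction (- real s)
           (- (real k * (real k + real s + real CARD('n) - 1)) - real s * (real CARD('n) - 1))
           (\<lambda>x t. (1 - t) ^ s * g x t)"
  using assms unfolding Vspace_def
proof (induction rule: lin_span_induct)
  case zero
  then show ?case using Dop_eigenfunction_zero by simp
next
  case (lincomb c f g)
  then obtain m Y where "m \<le> k" "Y \<in> harm m"
    and f: "f = (\<lambda>x t. jacobiP (k - m) (2 * real m + real CARD('n) - 2) (real s) (1 - 2 * t) * Y x)"
    by auto
  have "real m + real (k - m) = real k"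
    using \<open>m \<le> k\<close> by simp
  then have "radial_eigen CARD('n) (- real s) m
      (- (real k * (real k + real s + real CARD('n) - 1)) - real s * (real CARD('n) - 1))
      (\<lambda>t. ((1 - t) ^ s * jacobiP (k - m) (2 * real m + real CARD('n) - 2) (real s) (1 - 2 * t)) * t ^ m)"
    using radial_eigen_mult_one_minus_power[OF jacobi_radial_eigen[of _ _ m "k - m"]]
    by (simp add: mult.assoc)
  from Dop_eigenfunction_of_radial_eigen[OF \<open>Y \<in> harm m\<close> this]
  have "Dop_eigenfunction (- real s)
      (- (real k * (real k + real s + real CARD('n) - 1)) - real s * (real CARD('n) - 1))
      (\<lambda>x t. (1 - t) ^ s * f x t)"
    unfolding f by (simp add: mult.assoc)
  moreover have "(\<lambda>x t. (1 - t) ^ s * (c * f x t + g x t))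
      = (\<lambda>x t. c * ((1 - t) ^ s * f x t) + (1 - t) ^ s * g x t)"
    by (simp add: algebra_simps)
  ultimately show ?case
    using Dop_eigenfunction_lincomb[OF _ lincomb.IH] by simp
qed

theorem mainTheorem10:
  fixes Z :: "real^'n \<Rightarrow> real \<Rightarrow> real" and n s :: nat
  assumes "CARD('n) \<ge> 2" and "s \<ge> 2" and "Z \<in> Uspace n s"
  shows "\<forall>t \<xi>. 0 < t \<and> t \<le> 1 \<and> norm \<xi> = 1 \<longrightarrow>
           Dop (- real s) Z t \<xi>
             = - (real n * (real n - real s + real CARD('n) - 1)) * Z (t *\<^sub>R \<xi>) t"
proof -
  \<comment> \<open>The computation works for every dimension and every \<open>s\<close>.\<close>
  let ?\<mu> = "- (real n * (real n - real s + real CARD('n) - 1))"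
  have harmonic: "Dop_eigenfunction (- real s) ?\<mu> (\<lambda>x t. Y x)"
    if "Y \<in> harm n" for Y :: "real^'n \<Rightarrow> real"
    using Dop_eigenfunction_jacobi_harm[OF that, of "- real s" 0] by (simp add: jacobiP_def algebra_simps)
  have jacobi: "Dop_eigenfunction (- real s) ?\<mu>
      (\<lambda>x t. jacobiP j (2 * real n - 2 * real j + real CARD('n) - 2) (- real s) (1 - 2 * t) * Y x)"
    if "j \<in> {1..min (s - 1) n}" "Y \<in> harm (n - j)" for j and Y :: "real^'n \<Rightarrow> real"
    using Dop_eigenfunction_jacobi_harm[OF that(2), of "- real s" j] that(1)
    by (simp add: of_nat_diff algebra_simps)
  have shifted: "Dop_eigenfunction (- real s) ?\<mu> (\<lambda>x t. (1 - t) ^ s * g x t)"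
    if "s \<le> n" "g \<in> Vspace (n - s) (real s)" for g :: "real^'n \<Rightarrow> real \<Rightarrow> real"
    using Dop_eigenfunction_Vspace_shift[OF that(2)] that(1) by (simp add: of_nat_diff algebra_simps)
  have "Dop_eigenfunction (- real s) ?\<mu> Z"
    using assms(3) unfolding Uspace_def
    by (rule Dop_eigenfunction_lin_span)
       (auto intro: harmonic jacobi shifted Dop_eigenfunction_zero split: if_splits)
  then show ?thesis
    unfolding Dop_eigenfunction_def by auto
qed

end
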